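(* Let $n,k$ be integers with $1<k<n-1$ and let $\mathcal{P}_{k,n}=\{x\in[0,1]^n:\sum_{i=1}^n x_i=k\}$ with vertex set $V$. There is no family of Bernstein polynomials $\{P_v\}_{v\in V}$ such that the Bernoulli race over $\{P_v\}_{v\in V}$ is a strong Bernoulli factory for $\mathcal{P}_{k,n}$.
   Context: A Bernstein monomial is $\prod_{i=1}^n x_i^{a_i}(1-x_i)^{b_i}$ with nonnegative integers $a_i,b_i$; a Bernstein polynomial is a finite combination $\sum_j c_jM_j(x)$ of Bernstein monomials with positive coefficients $c_j$. A Bernoulli factory with output set $V$ (for inputs $x\in[0,1]^n$) is a (possibly infinite) rooted binary tree whose internal nodes are labeled by an index $i\in[n]$ or a known constant $c\in(0,1)$ and whose leaves are labeled by elements of $V$; on input $x$ one walks from the root, at a node labeled $i$ flipping a fresh independent coin that is $1$ with probability $x_i$ (an $x_i$-coin), at a node labeled $c$ a fresh coin of bias $c$, following the edge labeled by the outcome, and outputs the label of the leaf reached. A strong Bernoulli factory for a polytope $\mathcal{P}$ with vertex set $V$ is such a factory with output set $V$ that terminates almost surely and satisfies $\mathbb{E}[\mathcal{F}(x)]=x$ for all $x\in\mathcal{P}$. The Bernoulli race over Bernstein polynomials $\{P_v\}_{v\in V}$ is the following factory: fix a constant $C\ge1$ at least the sum of the coefficients of every $P_v$. In each round, pick $v\in V$ uniformly at random; writing $P_v=\sum_j c_jM_j$, select monomial $M_j$ with probability $c_j/C$ (with the remaining probability select none, which counts as failure); if $M_j=\prod_i x_i^{a_i}(1-x_i)^{b_i}$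 is selected, flip the $x_i$-coin $a_i+b_i$ times for each $i$, and declare success iff for every $i$ the first $a_i$ flips are $1$ and the next $b_i$ flips are $0$. On success output $v$; otherwise start a new round. *)

theory Defs
  imports "HOL-Probability.Probability"
begin

text \<open>The polytope P_{k,n} inside [0,1]^n, with coordinates indexed by a finite type 'n
  (so n = CARD('n)), and its vertex set (extreme points).\<close>

definition hypersimplex :: "nat \<Rightarrow> (real ^ 'n) set" where
  "hypersimplex k = {x. (\<forall>i. 0 \<le> x $ i \<and> x $ i \<le> 1) \<and> (\<Sum>i\<in>UNIV. x $ i) = real k}"

definition hypersimplex_vertices :: "nat \<Rightarrow> (real ^ 'n) set" where
  "hypersimplex_vertices k = {v. v extreme_point_of (hypersimplex k)}"

text \<open>A Bernstein monomial prod_i x_i^(a_i) (1-x_i)^(b_i) is given by the exponent pair (a,b).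
  A Bernstein polynomial is a finite list of (coefficient, monomial) with positive coefficients.\<close>

type_synonym 'n bmono = "('n \<Rightarrow> nat) \<times> ('n \<Rightarrow> nat)"
type_synonym 'n bpoly = "(real \<times> 'n bmono) list"

definition bernstein_poly :: "'n bpoly \<Rightarrow> bool" where
  "bernstein_poly P \<longleftrightarrow> (\<forall>(c, m) \<in> set P. c > 0)"

definition coeff_sum :: "'n bpoly \<Rightarrow> real" where
  "coeff_sum P = (\<Sum>(c, m) \<leftarrow> P. c)"

fun coin_flips :: "real \<Rightarrow> nat \<Rightarrow> bool list pmf" where
  "coin_flips p 0 = return_pmf []"
| "coin_flips p (Suc m) =
     bind_pmf (bernoulli_pmf p) (\<lambda>b. bind_pmf (coin_flips p m) (\<lambda>bs. return_pmf (b # bs)))"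

definition monomial_test :: "real ^ 'n \<Rightarrow> 'n bmono \<Rightarrow> bool pmf" where
  "monomial_test x m =
     map_pmf (\<lambda>f. \<forall>i. f i = replicate (fst m i) True @ replicate (snd m i) False)
       (Pi_pmf UNIV [] (\<lambda>i. coin_flips (x $ i) (fst m i + snd m i)))"

definition select_monomial :: "'n bpoly \<Rightarrow> real \<Rightarrow> nat option pmf" where
  "select_monomial P C = embed_pmf (\<lambda>oj. case oj of
       None \<Rightarrow> 1 - coeff_sum P / C
     | Some j \<Rightarrow> (if j < length P then fst (P ! j) / C else 0))"

text \<open>One round of the Bernoulli race: Some v = success with output v, None = failure.\<close>

definition race_round ::
  "(real ^ 'n) set \<Rightarrow> (real ^ 'n \<Rightarrow> 'n bpoly) \<Rightarrow> real \<Rightarrow> real ^ 'n \<Rightarrow> (real ^ 'n) option pmf" where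
  "race_round V P C x =
     bind_pmf (pmf_of_set V) (\<lambda>v.
     bind_pmf (select_monomial (P v) C) (\<lambda>oj.
       case oj of
         None \<Rightarrow> return_pmf None
       | Some j \<Rightarrow> map_pmf (\<lambda>s. if s then Some v else None) (monomial_test x (snd (P v ! j)))))"

text \<open>Rounds are repeated independently until the first success; the probability that the race
  outputs v is sum_{r>=0} Pr[round fails]^r * Pr[round succeeds with v].\<close>

definition race_output_prob ::
  "(real ^ 'n) set \<Rightarrow> (real ^ 'n \<Rightarrow> 'n bpoly) \<Rightarrow> real \<Rightarrow> real ^ 'n \<Rightarrow> real ^ 'n \<Rightarrow> real" where
  "race_output_prob V P C x v =
     (\<Sum>r. pmf (race_round V P C x) None ^ r * pmf (race_round V P C x) (Some v))"

text \<open>Strong Bernoulli factory for the polytope with vertex set V: for every x in the polytope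
  the race terminates almost surely (total output probability 1) and E[F(x)] = x.\<close>

definition race_is_strong_factory ::
  "(real ^ 'n) set \<Rightarrow> (real ^ 'n) set \<Rightarrow> (real ^ 'n \<Rightarrow> 'n bpoly) \<Rightarrow> real \<Rightarrow> bool" where
  "race_is_strong_factory Q V P C \<longleftrightarrow>
     (\<forall>x \<in> Q.
        (\<Sum>v\<in>V. race_output_prob V P C x v) = 1 \<and>
        (\<Sum>v\<in>V. race_output_prob V P C x v *\<^sub>R v) = x)"

end

theory Submission
  imports Defs
begin

(* At a point x of the hypersimplex the race outputs vertex v with probability proportional to
   P_v(x). A vertex u is never output on the facet x_l = 1 - u_l, and 1 < k < n - 1 guarantees
   that this facet contains a point whose other coordinates all lie strictly between 0 and 1;
   hence every monomial of P_u contains the factor x_l if u_l = 1 and 1 - x_l if u_l = 0.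
   Now let u = w + e_i - e_j be adjacent vertices and x = (1 - t) w + t u. Unbiasedness forces
   the race to output u with probability t and w with probability 1 - t, so
   (1 - t) P_u(x) = t P_w(x). By the divisibility P_u(x) <= C t^2, whereas P_w(x) stays bounded
   below by a monomial of P_w that does not vanish at w; this fails for small t > 0. *)

section \<open>Output probabilities of the Bernoulli race\<close>

definition eval_bmono :: "real ^ 'n \<Rightarrow> 'n bmono \<Rightarrow> real" where
  "eval_bmono x m = (\<Prod>i\<in>UNIV. (x $ i) ^ fst m i * (1 - x $ i) ^ snd m i)"

definition eval_bpoly :: "real ^ 'n \<Rightarrow> 'n bpoly \<Rightarrow> real" where
  "eval_bpoly x P = (\<Sum>j<length P. fst (P ! j) * eval_bmono x (snd (P ! j)))"

lemma coeff_sum_conv_nth: "coeff_sum P = (\<Sum>j<length P. fst (P ! j))"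
  unfolding coeff_sum_def by (simp add: case_prod_beta sum_list_sum_nth atLeast0LessThan)

lemma bernstein_poly_coeff_pos: "bernstein_poly P \<Longrightarrow> j < length P \<Longrightarrow> fst (P ! j) > 0"
  using nth_mem[of j P] unfolding bernstein_poly_def by (auto simp: case_prod_beta)

lemma pmf_coin_flips:
  assumes "0 \<le> p" "p \<le> 1"
  shows "pmf (coin_flips p m) bs =
    (if length bs = m then (\<Prod>b\<leftarrow>bs. if b then p else 1 - p) else 0)"
proof (induction m arbitrary: bs)
  case 0
  then show ?case by (cases bs) auto
next
  case (Suc m)
  have "coin_flips p (Suc m) = bernoulli_pmf p \<bind> (\<lambda>b. map_pmf ((#) b) (coin_flips p m))"
    by (simp add: map_pmf_def)
  moreover have "pmf (map_pmf ((#) b) (coin_flips p m)) bs =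
      (case bs of [] \<Rightarrow> 0 | b' # bs' \<Rightarrow> if b = b' then pmf (coin_flips p m) bs' else 0)" for b
    by (cases bs) (auto simp: pmf_map_inj' intro!: pmf_map_outside)
  ultimately show ?case
    by (cases bs) (auto simp: Suc pmf_bind integral_bernoulli_pmf[OF assms])
qed

lemma pmf_monomial_test:
  assumes "\<And>i. 0 \<le> x $ i \<and> x $ i \<le> 1"
  shows "pmf (monomial_test x m) True = eval_bmono x m"
proof -
  let ?flips = "Pi_pmf UNIV [] (\<lambda>i. coin_flips (x $ i) (fst m i + snd m i))"
  let ?pattern = "\<lambda>i. replicate (fst m i) True @ replicate (snd m i) False"
  have "pmf (monomial_test x m) True = measure ?flips {?pattern}"
    unfolding monomial_test_def pmf_map
    by (rule arg_cong[where f="measure _"]) (auto simp: fun_eq_iff)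
  also have "\<dots> = eval_bmono x m"
    unfolding measure_pmf_single
    by (subst pmf_Pi') (auto simp: eval_bmono_def pmf_coin_flips assms prod_list_replicate)
  finally show ?thesis .
qed

lemma pmf_select_monomial:
  assumes "bernstein_poly P" "C \<ge> 1" "coeff_sum P \<le> C"
  shows "pmf (select_monomial P C) oj = (case oj of
       None \<Rightarrow> 1 - coeff_sum P / C
     | Some j \<Rightarrow> (if j < length P then fst (P ! j) / C else 0))"
  unfolding select_monomial_def
proof (rule pmf_embed_pmf)
  let ?f = "\<lambda>oj. case oj of None \<Rightarrow> 1 - coeff_sum P / C
     | Some j \<Rightarrow> (if j < length P then fst (P ! j) / C else 0)"
  let ?A = "insert None (Some ` {..<length P})"
  have pos: "j < length P \<Longrightarrow> fst (P ! j) > 0" for j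
    using assms(1) by (rule bernstein_poly_coeff_pos)
  show nonneg: "0 \<le> ?f oj" for oj
    using assms pos by (cases oj) (auto simp: less_imp_le)
  have "(\<integral>\<^sup>+oj. ennreal (?f oj) \<partial>count_space UNIV) = (\<Sum>oj\<in>?A. ennreal (?f oj))"
    by (rule nn_integral_count_space') (auto split: option.splits)
  also have "\<dots> = ennreal (?f None + (\<Sum>j<length P. fst (P ! j) / C))"
    using nonneg by (simp add: sum_ennreal sum.reindex)
  also have "?f None + (\<Sum>j<length P. fst (P ! j) / C) = 1"
    by (simp add: coeff_sum_conv_nth sum_divide_distrib)
  finally show "(\<integral>\<^sup>+oj. ennreal (?f oj) \<partial>count_space UNIV) = 1" by simp
qed

lemma pmf_bind_select_monomial:
  assumes "bernstein_poly P" "C \<ge> 1" "coeff_sum P \<le> C"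
  shows "pmf (select_monomial P C \<bind> f) y =
    (1 - coeff_sum P / C) * pmf (f None) y + (\<Sum>j<length P. fst (P ! j) / C * pmf (f (Some j)) y)"
proof -
  let ?A = "insert None (Some ` {..<length P})"
  have "pmf (select_monomial P C \<bind> f) y = (\<Sum>oj\<in>?A. pmf (select_monomial P C) oj *\<^sub>R pmf (f oj) y)"
    unfolding pmf_bind
    by (rule integral_measure_pmf)
       (auto simp: set_pmf_iff pmf_select_monomial assms split: option.splits if_splits)
  then show ?thesis
    by (simp add: sum.reindex pmf_select_monomial assms)
qed

lemma pmf_race_round_Some:
  assumes V: "finite V" "V \<noteq> {}"
    and P: "\<And>v. v \<in> V \<Longrightarrow> bernstein_poly (P v)" "C \<ge> 1" "\<And>v. v \<in> V \<Longrightarrow> coeff_sum (P v) \<le> C"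
    and x: "\<And>i. 0 \<le> x $ i \<and> x $ i \<le> 1"
  shows "pmf (race_round V P C x) (Some v) =
    (if v \<in> V then eval_bpoly x (P v) / (C * card V) else 0)"
proof -
  have attempt: "pmf (map_pmf (\<lambda>s. if s then Some v' else None) (monomial_test x m)) (Some v) =
      (if v' = v then eval_bmono x m else 0)" for v' m
  proof -
    have "pmf (map_pmf (\<lambda>s. if s then Some v' else None) (monomial_test x m)) (Some v) =
        measure (monomial_test x m) (if v' = v then {True} else {})"
      unfolding pmf_map by (rule arg_cong[where f="measure _"]) (auto split: if_splits)
    then show ?thesis by (simp add: measure_pmf_single pmf_monomial_test x)
  qed
  have "pmf (select_monomial (P v') C \<bind> (\<lambda>oj. case oj of
         None \<Rightarrow> return_pmf None
       | Some j \<Rightarrow> map_pmf (\<lambda>s. if s then Some v' else None) (monomial_test x (snd (P v' ! j)))))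
       (Some v) = (if v' = v then eval_bpoly x (P v) / C else 0)" if "v' \<in> V" for v'
    by (simp only: pmf_bind_select_monomial P that option.case attempt)
       (simp add: eval_bpoly_def sum_divide_distrib)
  then have "pmf (race_round V P C x) (Some v) =
      (\<Sum>v'\<in>V. if v' = v then eval_bpoly x (P v) / C else 0) / card V"
    unfolding race_round_def pmf_bind integral_pmf_of_set[OF V(2,1)]
    by (intro arg_cong[where f="\<lambda>t. t / _"] sum.cong refl) (simp only: pmf_bind[symmetric])
  then show ?thesis using V by simp
qed

lemma race_output_prob_geometric:
  "race_output_prob V P C x v =
     pmf (race_round V P C x) (Some v) / (1 - pmf (race_round V P C x) None)"
proof -
  let ?R = "race_round V P C x"
  let ?q = "pmf ?R None" and ?s = "pmf ?R (Some v)"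
  have "?q + ?s = measure ?R {None, Some v}"
    by (subst measure_measure_pmf_finite) auto
  also have "\<dots> \<le> 1" by (rule measure_pmf.prob_le_1)
  finally have "?q + ?s \<le> 1" .
  show ?thesis
  proof (cases "?q < 1")
    case True
    then have "(\<lambda>r. ?q ^ r * ?s) sums (1 / (1 - ?q) * ?s)"
      by (intro sums_mult2 geometric_sums) simp
    then show ?thesis unfolding race_output_prob_def by (simp add: sums_unique[symmetric])
  next
    case False
    with \<open>?q + ?s \<le> 1\<close> have "?s = 0" using pmf_nonneg[of ?R "Some v"] by linarith
    then show ?thesis unfolding race_output_prob_def by simp
  qed
qed

lemma race_output_prob_eq_eval_bpoly:
  assumes "finite V" "V \<noteq> {}" "v \<in> V"
    and "\<And>v. v \<in> V \<Longrightarrow> bernstein_poly (P v)" "C \<ge> 1" "\<And>v. v \<in> V \<Longrightarrow> coeff_sum (P v) \<le> C"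
    and "\<And>i. 0 \<le> x $ i \<and> x $ i \<le> 1"
  shows "race_output_prob V P C x v =
    eval_bpoly x (P v) / (C * card V * (1 - pmf (race_round V P C x) None))"
  by (simp add: race_output_prob_geometric pmf_race_round_Some assms)

section \<open>Vertices of the hypersimplex\<close>

lemma weighted_mean_of_unit_interval_eq_01:
  fixes p f :: "'a \<Rightarrow> real"
  assumes "finite I" "\<And>i. i \<in> I \<Longrightarrow> 0 \<le> p i" "sum p I = 1"
    and "\<And>i. i \<in> I \<Longrightarrow> 0 \<le> f i \<and> f i \<le> 1"
    and "(\<Sum>i\<in>I. p i * f i) = e" "e = 0 \<or> e = 1" "i \<in> I" "p i \<noteq> 0"
  shows "f i = e"
  using \<open>e = 0 \<or> e = 1\<close>
proof
  assume "e = 0"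
  then have "p i * f i = 0"
    using sum_nonneg_eq_0_iff[OF assms(1), of "\<lambda>j. p j * f j"] assms(2,4,5,7) by auto
  then show ?thesis using \<open>e = 0\<close> \<open>p i \<noteq> 0\<close> by simp
next
  assume "e = 1"
  then have "(\<Sum>i\<in>I. p i * (1 - f i)) = 0"
    using assms(3,5) by (simp add: algebra_simps sum_subtractf)
  then have "p i * (1 - f i) = 0"
    using sum_nonneg_eq_0_iff[OF assms(1), of "\<lambda>j. p j * (1 - f j)"] assms(2,4,7) by auto
  then show ?thesis using \<open>e = 1\<close> \<open>p i \<noteq> 0\<close> by simp
qed

lemma mem_hypersimplex:
  "x \<in> hypersimplex k \<longleftrightarrow> (\<forall>i. 0 \<le> x $ i \<and> x $ i \<le> 1) \<and> (\<Sum>i\<in>UNIV. x $ i) = real k"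
  by (simp add: hypersimplex_def)

lemma convex_hypersimplex: "convex (hypersimplex k)"
proof (rule convexI)
  fix x y :: "real ^ 'n" and u v :: real
  assume "x \<in> hypersimplex k" "y \<in> hypersimplex k" "0 \<le> u" "0 \<le> v" "u + v = 1"
  then show "u *\<^sub>R x + v *\<^sub>R y \<in> hypersimplex k"
    by (auto simp: mem_hypersimplex sum.distrib convex_bound_le
        simp flip: sum_distrib_left distrib_right)
qed

lemma zero_one_point_in_hypersimplex_vertices:
  assumes "v \<in> hypersimplex k" "\<And>i. v $ i = 0 \<or> v $ i = 1"
  shows "v \<in> hypersimplex_vertices k"
proof -
  have "v \<notin> open_segment a b" if a: "a \<in> hypersimplex k" and b: "b \<in> hypersimplex k" for a b
  proof
    assume "v \<in> open_segment a b"
    then obtain u where "a \<noteq> b" and u: "0 < u" "u < 1" and v: "v = (1 - u) *\<^sub>R a + u *\<^sub>R b"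
      by (auto simp: in_segment)
    have "(if t then b $ i else a $ i) = v $ i" for t i
    proof (rule weighted_mean_of_unit_interval_eq_01[where I=UNIV and p="\<lambda>t. if t then u else 1 - u"])
      show "(\<Sum>t\<in>UNIV. (if t then u else 1 - u) * (if t then b $ i else a $ i)) = v $ i"
        using v by (simp add: UNIV_bool)
      show "0 \<le> (if t then b $ i else a $ i) \<and> (if t then b $ i else a $ i) \<le> 1" for t
        using a b by (simp add: mem_hypersimplex)
    qed (use u assms(2) in \<open>auto simp: UNIV_bool\<close>)
    then have "a = b" by (metis vec_eq_iff)
    with \<open>a \<noteq> b\<close> show False ..
  qed
  then show ?thesis
    using assms(1) by (simp add: hypersimplex_vertices_def extreme_point_of_def)
qed

lemma hypersimplex_vertex_coord_01:
  fixes v :: "real ^ 'n::finite"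
  assumes "v \<in> hypersimplex_vertices k"
  shows "v $ i = 0 \<or> v $ i = 1"
proof (rule ccontr)
  assume "\<not> (v $ i = 0 \<or> v $ i = 1)"
  have v: "v \<in> hypersimplex k"
    and extreme: "\<And>a b. a \<in> hypersimplex k \<Longrightarrow> b \<in> hypersimplex k \<Longrightarrow> v \<notin> open_segment a b"
    using assms by (auto simp: hypersimplex_vertices_def extreme_point_of_def)
  have v01: "0 \<le> v $ l \<and> v $ l \<le> 1" for l
    using v by (simp add: mem_hypersimplex)
  with \<open>\<not> (v $ i = 0 \<or> v $ i = 1)\<close> have vi: "0 < v $ i" "v $ i < 1"
    by (auto simp: less_le)
  have "\<exists>j. j \<noteq> i \<and> 0 < v $ j \<and> v $ j < 1"
  proof (rule ccontr)
    assume "\<not> ?thesis"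
    then have "(\<Sum>l\<in>UNIV - {i}. v $ l) \<in> \<int>"
      using v01 by (intro Ints_sum) (metis Ints_0 Ints_1 Diff_iff insertI1 less_le)
    moreover have "v $ i = real k - (\<Sum>l\<in>UNIV - {i}. v $ l)"
      using v sum.remove[of UNIV i "vec_nth v"] by (simp add: mem_hypersimplex)
    ultimately have "v $ i \<in> \<int>" by simp
    with vi show False by (auto elim!: Ints_cases)
  qed
  then obtain j where j: "j \<noteq> i" "0 < v $ j" "v $ j < 1" by blast
  define e where "e = min (min (v $ i) (1 - v $ i)) (min (v $ j) (1 - v $ j))"
  have e: "0 < e" "e \<le> v $ i" "e \<le> 1 - v $ i" "e \<le> v $ j" "e \<le> 1 - v $ j"
    using vi j by (auto simp: e_def)
  define d :: "real ^ 'n" where "d = (\<chi> l. (if l = i then e else 0) - (if l = j then e else 0))"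
  have "v + d \<in> hypersimplex k" "v - d \<in> hypersimplex k"
    using v01 e j v by (auto simp: mem_hypersimplex d_def sum.distrib sum_subtractf)
  moreover have "v + d \<noteq> v - d"
    using e j by (auto simp: vec_eq_iff d_def intro!: exI[of _ i])
  moreover have "midpoint (v + d) (v - d) = v"
    by (simp add: midpoint_def vec_eq_iff)
  ultimately show False
    using extreme midpoint_in_open_segment[of "v + d" "v - d"] by metis
qed

lemma hypersimplex_vertices_iff:
  fixes v :: "real ^ 'n::finite"
  shows "v \<in> hypersimplex_vertices k \<longleftrightarrow> v \<in> hypersimplex k \<and> (\<forall>i. v $ i = 0 \<or> v $ i = 1)"
  using zero_one_point_in_hypersimplex_vertices hypersimplex_vertex_coord_01
    hypersimplex_vertices_def extreme_point_of_def
  by blast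

lemma finite_hypersimplex_vertices: "finite (hypersimplex_vertices k :: (real ^ 'n::finite) set)"
proof (rule finite_subset)
  show "hypersimplex_vertices k \<subseteq> vec_lambda ` ((UNIV :: 'n set) \<rightarrow>\<^sub>E {0::real, 1})"
  proof
    fix v :: "real ^ 'n" assume "v \<in> hypersimplex_vertices k"
    then have "vec_nth v \<in> UNIV \<rightarrow>\<^sub>E {0, 1}"
      by (auto dest: hypersimplex_vertex_coord_01)
    then show "v \<in> vec_lambda ` (UNIV \<rightarrow>\<^sub>E {0::real, 1})"
      by (rule rev_image_eqI) simp
  qed
qed (auto intro!: finite_PiE)

lemma indicator_vec_in_hypersimplex_vertices:
  "(\<chi> l. if l \<in> S then 1 else (0::real)) \<in> hypersimplex_vertices (card (S :: 'n::finite set))"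
  by (auto simp: hypersimplex_vertices_iff mem_hypersimplex sum.If_cases)

lemma hypersimplex_edge_exists:
  assumes "0 < k" "k < CARD('n::finite)"
  obtains u w :: "real ^ 'n" and i j
  where "u \<in> hypersimplex_vertices k" "w \<in> hypersimplex_vertices k" "i \<noteq> j"
    and "u $ i = 1" "u $ j = 0" "w $ i = 0" "w $ j = 1" "\<And>l. l \<noteq> i \<Longrightarrow> l \<noteq> j \<Longrightarrow> w $ l = u $ l"
proof -
  obtain S :: "'n set" where S: "card S = k"
    using obtain_subset_with_card_n[of k "UNIV :: 'n set"] assms by auto
  moreover from S assms have "S \<noteq> {}" "S \<noteq> UNIV" by auto
  ultimately obtain i j where "i \<in> S" "j \<notin> S" by blast
  let ?u = "\<chi> l. if l \<in> S then 1 else (0::real)"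
  let ?w = "\<chi> l. if l \<in> insert j (S - {i}) then 1 else (0::real)"
  have "card (insert j (S - {i})) = k"
    using S \<open>i \<in> S\<close> \<open>j \<notin> S\<close> assms(1) by (simp add: card.insert_remove card_Diff_singleton)
  then have "?w \<in> hypersimplex_vertices k"
    by (metis indicator_vec_in_hypersimplex_vertices)
  moreover have "?u \<in> hypersimplex_vertices k"
    using S indicator_vec_in_hypersimplex_vertices by blast
  ultimately show ?thesis
    using that[of ?u ?w i j] \<open>i \<in> S\<close> \<open>j \<notin> S\<close> by auto
qed

lemma hypersimplex_face_point_exists:
  assumes "1 < k" "k + 1 < CARD('n::finite)" "e = 0 \<or> e = 1"
  obtains x :: "real ^ 'n"
  where "x \<in> hypersimplex k" "x $ l = e" "\<And>l'. l' \<noteq> l \<Longrightarrow> 0 < x $ l' \<and> x $ l' < 1"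
proof -
  define c where "c = (real k - e) / (real CARD('n) - 1)"
  let ?x = "\<chi> l'. if l' = l then e else c"
  have c: "0 < c" "c < 1"
    using assms by (auto simp: c_def)
  have "(\<Sum>l'\<in>UNIV. ?x $ l') = e + (real CARD('n) - 1) * c"
    using sum.remove[of UNIV l "vec_nth ?x"] by (simp add: card_Diff_singleton of_nat_diff)
  also have "\<dots> = real k"
    using assms(2) by (simp add: c_def)
  finally have "?x \<in> hypersimplex k"
    using c assms(3) by (auto simp: mem_hypersimplex)
  then show ?thesis
    using that[of ?x] c by auto
qed

section \<open>Bernstein monomials on the unit cube\<close>

lemma eval_bmono_nonneg: "(\<And>i. 0 \<le> x $ i \<and> x $ i \<le> 1) \<Longrightarrow> 0 \<le> eval_bmono x m"
  unfolding eval_bmono_def by (intro prod_nonneg) auto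

lemma eval_bpoly_nonneg:
  "bernstein_poly P \<Longrightarrow> (\<And>i. 0 \<le> x $ i \<and> x $ i \<le> 1) \<Longrightarrow> 0 \<le> eval_bpoly x P"
  unfolding eval_bpoly_def
  by (intro sum_nonneg mult_nonneg_nonneg eval_bmono_nonneg)
     (auto dest: bernstein_poly_coeff_pos intro: less_imp_le)

lemma eval_bpoly_ge_term:
  assumes "bernstein_poly P" "\<And>i. 0 \<le> x $ i \<and> x $ i \<le> 1" "j < length P"
  shows "fst (P ! j) * eval_bmono x (snd (P ! j)) \<le> eval_bpoly x P"
  unfolding eval_bpoly_def using assms
  by (intro member_le_sum mult_nonneg_nonneg eval_bmono_nonneg)
     (auto dest: bernstein_poly_coeff_pos intro: less_imp_le)

lemma eval_bpoly_eq_0_imp: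
  assumes "bernstein_poly P" "\<And>i. 0 \<le> x $ i \<and> x $ i \<le> 1" "eval_bpoly x P = 0" "j < length P"
  shows "eval_bmono x (snd (P ! j)) = 0"
  using eval_bpoly_ge_term[OF assms(1,2,4)] eval_bmono_nonneg[OF assms(2)]
    bernstein_poly_coeff_pos[OF assms(1,4)] assms(3)
  by (simp add: mult_le_0_iff order_antisym)

lemma eval_bpoly_le:
  assumes "bernstein_poly P" "\<And>j. j < length P \<Longrightarrow> eval_bmono x (snd (P ! j)) \<le> B"
  shows "eval_bpoly x P \<le> coeff_sum P * B"
  unfolding eval_bpoly_def coeff_sum_conv_nth sum_distrib_right
  using assms by (intro sum_mono mult_left_mono) (auto dest: bernstein_poly_coeff_pos)

lemma eval_bmono_split:
  assumes "i \<noteq> j"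
  shows "eval_bmono x m = (x $ i) ^ fst m i * (1 - x $ i) ^ snd m i *
    ((x $ j) ^ fst m j * (1 - x $ j) ^ snd m j) *
    (\<Prod>l\<in>UNIV - {i, j}. (x $ l) ^ fst m l * (1 - x $ l) ^ snd m l)"
  using assms unfolding eval_bmono_def
  by (simp add: prod.remove[of UNIV i] prod.remove[of "UNIV - {i}" j] Diff_insert2[symmetric]
      insert_commute mult.assoc)

lemma power_mult_power_le_base:
  fixes y z :: real
  assumes "0 \<le> y" "y \<le> 1" "0 \<le> z" "z \<le> 1" "1 \<le> a"
  shows "y ^ a * z ^ b \<le> y"
proof -
  have "y ^ a * z ^ b \<le> y ^ a"
    using assms by (intro mult_left_le power_le_one) auto
  also have "\<dots> \<le> y ^ 1"
    using assms by (intro power_decreasing) auto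
  finally show ?thesis by simp
qed

lemma eval_bmono_le_of_exponents:
  assumes "i \<noteq> j" "\<And>l. 0 \<le> x $ l \<and> x $ l \<le> 1" "1 \<le> fst m i" "1 \<le> snd m j"
  shows "eval_bmono x m \<le> x $ i * (1 - x $ j)"
proof -
  let ?F = "\<lambda>l. (x $ l) ^ fst m l * (1 - x $ l) ^ snd m l"
  have F: "0 \<le> ?F l \<and> ?F l \<le> 1" for l
    using assms(2)[of l] by (auto intro!: mult_le_one power_le_one)
  have "?F i \<le> x $ i"
    using assms(2)[of i] assms(3) by (intro power_mult_power_le_base) auto
  moreover have "?F j \<le> 1 - x $ j"
    using assms(2)[of j] assms(4) power_mult_power_le_base[of "1 - x $ j" "x $ j" "snd m j"]
    by (simp add: mult.commute)
  moreover have "prod ?F (UNIV - {i, j}) \<le> 1"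
    using F by (intro prod_le_1) auto
  ultimately have "?F i * ?F j * prod ?F (UNIV - {i, j}) \<le> x $ i * (1 - x $ j) * 1"
    using F assms(2)[of i] assms(2)[of j] by (intro mult_mono prod_nonneg) auto
  then show ?thesis
    by (simp add: eval_bmono_split[OF assms(1)])
qed

lemma eval_bmono_eq_0_exponent:
  assumes "eval_bmono x m = 0" "\<And>l'. l' \<noteq> l \<Longrightarrow> 0 < x $ l' \<and> x $ l' < 1"
  shows "x $ l = 0 \<Longrightarrow> fst m l \<noteq> 0" and "x $ l = 1 \<Longrightarrow> snd m l \<noteq> 0"
proof -
  obtain l' where l': "(x $ l') ^ fst m l' * (1 - x $ l') ^ snd m l' = 0"
    using assms(1) unfolding eval_bmono_def by (auto simp: prod_zero_iff)
  moreover have "l' = l"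
    using l' assms(2)[of l'] by (cases "l' = l") auto
  ultimately show "x $ l = 0 \<Longrightarrow> fst m l \<noteq> 0" and "x $ l = 1 \<Longrightarrow> snd m l \<noteq> 0"
    by auto
qed

lemma eval_bmono_on_edge:
  assumes "i \<noteq> j" "\<And>l. w $ l = 0 \<or> w $ l = 1" "w $ i = 0" "w $ j = 1"
    and "\<And>l. l \<noteq> i \<Longrightarrow> l \<noteq> j \<Longrightarrow> x $ l = w $ l" "eval_bmono w m \<noteq> 0"
  shows "eval_bmono x m = (1 - x $ i) ^ snd m i * (x $ j) ^ fst m j"
proof -
  have nonzero: "(w $ l) ^ fst m l * (1 - w $ l) ^ snd m l \<noteq> 0" for l
    using assms(6) unfolding eval_bmono_def by (auto simp: prod_zero_iff)
  have "(x $ l) ^ fst m l * (1 - x $ l) ^ snd m l = 1" if "l \<in> UNIV - {i, j}" for l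
    using that nonzero[of l] assms(2)[of l] assms(5)[of l] by auto
  moreover have "fst m i = 0" "snd m j = 0"
    using nonzero[of i] nonzero[of j] assms(3,4) by auto
  ultimately show ?thesis
    by (simp add: eval_bmono_split[OF assms(1)])
qed

lemma exists_small_pos_lt_power:
  fixes c C :: real
  assumes "0 < c"
  obtains t where "0 < t" "t < 1" "C * t < c * (1 - t) ^ N"
proof -
  have "((\<lambda>t. c * (1 - t) ^ N - C * t) \<longlongrightarrow> c) (at_right 0)"
    by (auto intro!: tendsto_eq_intros)
  then have "\<forall>\<^sub>F t in at_right 0. 0 < c * (1 - t) ^ N - C * t"
    using assms by (rule order_tendstoD)
  moreover have "\<forall>\<^sub>F t in at_right (0::real). 0 < t \<and> t < 1"
    by (auto simp: eventually_at_right_field intro: exI[of _ 1])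
  ultimately obtain t where "0 < t" "t < 1" "0 < c * (1 - t) ^ N - C * t"
    using eventually_happens'[OF trivial_limit_at_right_real] eventually_conj by blast
  then show ?thesis using that by simp
qed

section \<open>Bernoulli races that are strong factories for the hypersimplex\<close>

locale hypersimplex_race =
  fixes k :: nat and P :: "real ^ 'n::finite \<Rightarrow> 'n bpoly" and C :: real
  assumes bernstein: "\<And>v. v \<in> hypersimplex_vertices k \<Longrightarrow> bernstein_poly (P v)"
    and C_ge_1: "1 \<le> C"
    and coeff_sum_le: "\<And>v. v \<in> hypersimplex_vertices k \<Longrightarrow> coeff_sum (P v) \<le> C"
    and strong_factory: "race_is_strong_factory (hypersimplex k) (hypersimplex_vertices k) P C"
begin

abbreviation output_prob :: "real ^ 'n \<Rightarrow> real ^ 'n \<Rightarrow> real" where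
  "output_prob \<equiv> race_output_prob (hypersimplex_vertices k) P C"

lemma sum_output_prob: "x \<in> hypersimplex k \<Longrightarrow> (\<Sum>v\<in>hypersimplex_vertices k. output_prob x v) = 1"
  using strong_factory by (simp add: race_is_strong_factory_def)

lemma sum_output_prob_coord:
  assumes "x \<in> hypersimplex k"
  shows "(\<Sum>v\<in>hypersimplex_vertices k. output_prob x v * v $ l) = x $ l"
proof -
  have "(\<Sum>v\<in>hypersimplex_vertices k. output_prob x v *\<^sub>R v) $ l = x $ l"
    using strong_factory assms by (simp add: race_is_strong_factory_def)
  then show ?thesis by simp
qed

lemma output_prob_proportional:
  assumes "x \<in> hypersimplex k"
  obtains K where "0 < K" "\<And>v. v \<in> hypersimplex_vertices k \<Longrightarrow> output_prob x v = eval_bpoly x (P v) / K"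
proof -
  let ?V = "hypersimplex_vertices k :: (real ^ 'n) set"
  define K where "K = C * card ?V * (1 - pmf (race_round ?V P C x) None)"
  have "?V \<noteq> {}"
    using sum_output_prob[OF assms] by auto
  then have eq: "output_prob x v = eval_bpoly x (P v) / K" if "v \<in> ?V" for v
    unfolding K_def using that assms bernstein C_ge_1 coeff_sum_le
    by (intro race_output_prob_eq_eval_bpoly finite_hypersimplex_vertices)
       (auto simp: mem_hypersimplex)
  have "K \<noteq> 0"
  proof
    assume "K = 0"
    then have "(\<Sum>v\<in>?V. output_prob x v) = 0" by (simp add: eq)
    with sum_output_prob[OF assms] show False by simp
  qed
  moreover have "0 \<le> K"
    unfolding K_def using C_ge_1 pmf_le_1[of "race_round ?V P C x" None]
    by (intro mult_nonneg_nonneg) auto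
  ultimately show ?thesis
    using that[of K] eq by simp
qed

lemma output_prob_nonneg:
  assumes "x \<in> hypersimplex k" "v \<in> hypersimplex_vertices k"
  shows "0 \<le> output_prob x v"
proof -
  obtain K where "0 < K" "output_prob x v = eval_bpoly x (P v) / K"
    using output_prob_proportional[OF assms(1)] assms(2) by metis
  then show ?thesis
    using assms bernstein by (simp add: eval_bpoly_nonneg mem_hypersimplex)
qed

lemma output_prob_eq_0_iff:
  assumes "x \<in> hypersimplex k" "v \<in> hypersimplex_vertices k"
  shows "output_prob x v = 0 \<longleftrightarrow> eval_bpoly x (P v) = 0"
proof -
  obtain K where "0 < K" "output_prob x v = eval_bpoly x (P v) / K"
    using output_prob_proportional[OF assms(1)] assms(2) by metis
  then show ?thesis by simp
qed

lemma output_prob_support_coord: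
  assumes "x \<in> hypersimplex k" "v \<in> hypersimplex_vertices k"
    and "x $ l = 0 \<or> x $ l = 1" "output_prob x v \<noteq> 0"
  shows "v $ l = x $ l"
  using finite_hypersimplex_vertices output_prob_nonneg[OF assms(1)] sum_output_prob[OF assms(1)]
    _ sum_output_prob_coord[OF assms(1)] assms(3,2,4)
  by (rule weighted_mean_of_unit_interval_eq_01) (auto simp: hypersimplex_vertices_iff mem_hypersimplex)

lemma bernstein_exponents_at_vertex:
  assumes "1 < k" "k + 1 < CARD('n)" "u \<in> hypersimplex_vertices k" "jj < length (P u)"
  shows "u $ l = 1 \<Longrightarrow> fst (snd (P u ! jj)) l \<noteq> 0"
    and "u $ l = 0 \<Longrightarrow> snd (snd (P u ! jj)) l \<noteq> 0"
proof -
  have face: "(x $ l = 0 \<longrightarrow> fst (snd (P u ! jj)) l \<noteq> 0) \<and> (x $ l = 1 \<longrightarrow> snd (snd (P u ! jj)) l \<noteq> 0)"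
    if "e = 0 \<or> e = 1" "u $ l \<noteq> e" "x \<in> hypersimplex k" "x $ l = e"
      "\<And>l'. l' \<noteq> l \<Longrightarrow> 0 < x $ l' \<and> x $ l' < 1" for x e
  proof -
    have "output_prob x u = 0"
      using output_prob_support_coord[OF \<open>x \<in> hypersimplex k\<close> assms(3)] that by auto
    then have "eval_bmono x (snd (P u ! jj)) = 0"
      using that(3) assms(3,4) bernstein
      by (intro eval_bpoly_eq_0_imp) (auto simp: output_prob_eq_0_iff mem_hypersimplex)
    then show ?thesis
      using eval_bmono_eq_0_exponent that(5) by blast
  qed
  show "u $ l = 1 \<Longrightarrow> fst (snd (P u ! jj)) l \<noteq> 0"
    using hypersimplex_face_point_exists[OF assms(1,2), of 0 l] face[of 0] by auto
  show "u $ l = 0 \<Longrightarrow> snd (snd (P u ! jj)) l \<noteq> 0"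
    using hypersimplex_face_point_exists[OF assms(1,2), of 1 l] face[of 1] by auto
qed

lemma vertex_nonvanishing_monomial:
  assumes "w \<in> hypersimplex_vertices k"
  obtains jj where "jj < length (P w)" "eval_bmono w (snd (P w ! jj)) \<noteq> 0"
proof -
  have w: "w \<in> hypersimplex k"
    using assms by (simp add: hypersimplex_vertices_iff)
  obtain v where v: "v \<in> hypersimplex_vertices k" "output_prob w v \<noteq> 0"
    using sum_output_prob[OF w] by (metis sum.neutral zero_neq_one)
  then have "v = w"
    using output_prob_support_coord[OF w] hypersimplex_vertex_coord_01[OF assms]
    by (simp add: vec_eq_iff)
  with v w have "eval_bpoly w (P w) \<noteq> 0"
    by (simp add: output_prob_eq_0_iff)
  then show ?thesis
    using that unfolding eval_bpoly_def by (metis (no_types, lifting) lessThan_iff mult_zero_right sum.neutral)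
qed

lemma output_prob_on_edge:
  assumes "u \<in> hypersimplex_vertices k" "w \<in> hypersimplex_vertices k" "i \<noteq> j"
    and "u $ i = 1" "u $ j = 0" "w $ i = 0" "w $ j = 1" "\<And>l. l \<noteq> i \<Longrightarrow> l \<noteq> j \<Longrightarrow> w $ l = u $ l"
    and "0 \<le> t" "t \<le> 1"
  shows "output_prob ((1 - t) *\<^sub>R w + t *\<^sub>R u) u = t"
proof -
  let ?V = "hypersimplex_vertices k :: (real ^ 'n) set"
  let ?x = "(1 - t) *\<^sub>R w + t *\<^sub>R u"
  have x: "?x \<in> hypersimplex k"
    using assms(1,2,9,10) by (intro convexD[OF convex_hypersimplex]) (auto simp: hypersimplex_vertices_iff)
  have x_i: "?x $ i = t" and x_rest: "\<And>l. l \<noteq> i \<Longrightarrow> l \<noteq> j \<Longrightarrow> ?x $ l = u $ l"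
    using assms(4,6,8) by (auto simp: algebra_simps)
  have sum_split: "(\<Sum>l\<in>UNIV. y $ l) = y $ i + y $ j + (\<Sum>l\<in>UNIV - {i, j}. y $ l)" for y :: "real ^ 'n"
    using assms(3) by (simp add: sum.remove[of UNIV i] sum.remove[of "UNIV - {i}" j] Diff_insert2[symmetric]
      insert_commute add.assoc)
  have support: "v = u \<or> v = w" if v: "v \<in> ?V" "output_prob ?x v \<noteq> 0" for v
  proof -
    have rest: "v $ l = u $ l" if "l \<noteq> i" "l \<noteq> j" for l
      using output_prob_support_coord[OF x v(1) _ v(2), of l] x_rest[OF that]
        hypersimplex_vertex_coord_01[OF assms(1), of l] by auto
    have "(\<Sum>l\<in>UNIV - {i, j}. v $ l) = (\<Sum>l\<in>UNIV - {i, j}. u $ l)"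
      using rest by (intro sum.cong) auto
    then have "v $ i + v $ j = 1"
      using sum_split[of u] sum_split[of v] v(1) assms(1,4,5) by (simp add: hypersimplex_vertices_iff mem_hypersimplex)
    then consider "v $ i = 1" "v $ j = 0" | "v $ i = 0" "v $ j = 1"
      using hypersimplex_vertex_coord_01[OF v(1), of i] hypersimplex_vertex_coord_01[OF v(1), of j] by fastforce
    then show ?thesis
      using rest assms(4-8) by cases (metis vec_eq_iff)+
  qed
  have "t = (\<Sum>v\<in>?V. output_prob ?x v * v $ i)"
    using sum_output_prob_coord[OF x] x_i by simp
  also have "\<dots> = output_prob ?x u * u $ i"
    using assms(1,6) finite_hypersimplex_vertices
    by (subst sum.remove[of _ u]) (auto intro!: sum.neutral dest: support)
  finally show ?thesis
    using assms(4) by simp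
qed

lemma eval_bpoly_ratio_on_edge:
  assumes "u \<in> hypersimplex_vertices k" "w \<in> hypersimplex_vertices k" "i \<noteq> j"
    and "u $ i = 1" "u $ j = 0" "w $ i = 0" "w $ j = 1" "\<And>l. l \<noteq> i \<Longrightarrow> l \<noteq> j \<Longrightarrow> w $ l = u $ l"
    and "0 \<le> t" "t \<le> 1" "x = (1 - t) *\<^sub>R w + t *\<^sub>R u"
  shows "(1 - t) * eval_bpoly x (P u) = t * eval_bpoly x (P w)"
proof -
  have "x \<in> hypersimplex k"
    unfolding assms(11) using assms(1,2,9,10)
    by (intro convexD[OF convex_hypersimplex]) (auto simp: hypersimplex_vertices_iff)
  then obtain K where K: "0 < K" "\<And>v. v \<in> hypersimplex_vertices k \<Longrightarrow> output_prob x v = eval_bpoly x (P v) / K"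
    using output_prob_proportional by blast
  have "eval_bpoly x (P u) / K = t"
    using output_prob_on_edge[OF assms(1-10)] K(2)[OF assms(1)] assms(11) by simp
  moreover have "eval_bpoly x (P w) / K = 1 - t"
    using output_prob_on_edge[of w u j i "1 - t"] K(2)[OF assms(2)] assms by (simp add: add.commute)
  ultimately show ?thesis
    using K(1) by (simp add: divide_eq_eq)
qed

lemma eval_bpoly_le_of_exponents:
  assumes "u \<in> hypersimplex_vertices k" "i \<noteq> j" "\<And>l. 0 \<le> x $ l \<and> x $ l \<le> 1"
    and "\<And>jj. jj < length (P u) \<Longrightarrow> 1 \<le> fst (snd (P u ! jj)) i \<and> 1 \<le> snd (snd (P u ! jj)) j"
  shows "eval_bpoly x (P u) \<le> C * (x $ i * (1 - x $ j))"
proof -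
  have "eval_bpoly x (P u) \<le> coeff_sum (P u) * (x $ i * (1 - x $ j))"
    using bernstein[OF assms(1)] eval_bmono_le_of_exponents[OF assms(2,3)] assms(4)
    by (intro eval_bpoly_le) auto
  also have "\<dots> \<le> C * (x $ i * (1 - x $ j))"
    using coeff_sum_le[OF assms(1)] assms(3)[of i] assms(3)[of j] by (intro mult_right_mono) auto
  finally show ?thesis .
qed

lemma eval_bpoly_lower_bound_on_edge:
  assumes "u \<in> hypersimplex_vertices k" "w \<in> hypersimplex_vertices k" "i \<noteq> j"
    and "u $ i = 1" "u $ j = 0" "w $ i = 0" "w $ j = 1" "\<And>l. l \<noteq> i \<Longrightarrow> l \<noteq> j \<Longrightarrow> w $ l = u $ l"
  obtains c N where "0 < c"
    "\<And>t. 0 \<le> t \<Longrightarrow> t \<le> 1 \<Longrightarrow> c * (1 - t) ^ N \<le> eval_bpoly ((1 - t) *\<^sub>R w + t *\<^sub>R u) (P w)"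
proof -
  obtain jw where jw: "jw < length (P w)" "eval_bmono w (snd (P w ! jw)) \<noteq> 0"
    using vertex_nonvanishing_monomial[OF assms(2)] by blast
  let ?c = "fst (P w ! jw)" and ?m = "snd (P w ! jw)"
  have "?c * (1 - t) ^ (snd ?m i + fst ?m j) \<le> eval_bpoly ((1 - t) *\<^sub>R w + t *\<^sub>R u) (P w)"
    if "0 \<le> t" "t \<le> 1" for t
  proof -
    let ?x = "(1 - t) *\<^sub>R w + t *\<^sub>R u"
    have "?x \<in> hypersimplex k"
      using assms(1,2) that
      by (intro convexD[OF convex_hypersimplex]) (auto simp: hypersimplex_vertices_iff)
    then have x01: "0 \<le> ?x $ l \<and> ?x $ l \<le> 1" for l
      by (simp add: mem_hypersimplex)
    have "eval_bmono ?x ?m = (1 - t) ^ (snd ?m i + fst ?m j)"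
      using eval_bmono_on_edge[OF assms(3) hypersimplex_vertex_coord_01[OF assms(2)] assms(6,7) _ jw(2),
          of ?x] assms(4-8)
      by (simp add: algebra_simps power_add)
    then show ?thesis
      using eval_bpoly_ge_term[OF bernstein[OF assms(2)] x01 jw(1)] by simp
  qed
  moreover have "0 < ?c"
    using bernstein[OF assms(2)] jw(1) by (rule bernstein_poly_coeff_pos)
  ultimately show ?thesis
    using that by blast
qed

lemma exists_monomial_not_divisible_on_edge:
  assumes "u \<in> hypersimplex_vertices k" "w \<in> hypersimplex_vertices k" "i \<noteq> j"
    and "u $ i = 1" "u $ j = 0" "w $ i = 0" "w $ j = 1" "\<And>l. l \<noteq> i \<Longrightarrow> l \<noteq> j \<Longrightarrow> w $ l = u $ l"
  shows "\<exists>jj < length (P u). fst (snd (P u ! jj)) i = 0 \<or> snd (snd (P u ! jj)) j = 0"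
proof (rule ccontr)
  assume "\<not> ?thesis"
  then have divisible: "1 \<le> fst (snd (P u ! jj)) i \<and> 1 \<le> snd (snd (P u ! jj)) j"
    if "jj < length (P u)" for jj
    using that by auto
  obtain c N where c: "0 < c"
    and lower: "\<And>t. 0 \<le> t \<Longrightarrow> t \<le> 1 \<Longrightarrow> c * (1 - t) ^ N \<le> eval_bpoly ((1 - t) *\<^sub>R w + t *\<^sub>R u) (P w)"
    using eval_bpoly_lower_bound_on_edge[OF assms] by blast
  obtain t where t: "0 < t" "t < 1" "C * t < c * (1 - t) ^ N"
    using exists_small_pos_lt_power[OF c] by blast
  define x where "x = (1 - t) *\<^sub>R w + t *\<^sub>R u"
  have "x \<in> hypersimplex k"
    unfolding x_def using assms(1,2) t
    by (intro convexD[OF convex_hypersimplex]) (auto simp: hypersimplex_vertices_iff)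
  then have x01: "0 \<le> x $ l \<and> x $ l \<le> 1" for l
    by (simp add: mem_hypersimplex)
  have "t * (c * (1 - t) ^ N) \<le> t * eval_bpoly x (P w)"
    using lower[of t] t by (simp add: x_def)
  also have "\<dots> = (1 - t) * eval_bpoly x (P u)"
    using eval_bpoly_ratio_on_edge[OF assms, of t x] t by (simp add: x_def)
  also have "\<dots> \<le> 1 * (C * (t * t))"
    using eval_bpoly_le_of_exponents[OF assms(1,3) x01 divisible] eval_bpoly_nonneg[OF bernstein[OF assms(1)] x01]
      assms(4-7) t
    by (intro mult_mono) (auto simp: x_def)
  finally have "t * (c * (1 - t) ^ N) \<le> t * (C * t)"
    by (simp add: mult.assoc mult.left_commute)
  then show False
    using t by (simp add: mult_le_cancel_left_pos)
qed

end

theorem corollary7p2: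
  fixes k :: nat
  assumes "1 < k" and "k + 1 < CARD('n::finite)"
  shows "\<not> (\<exists>(P :: real ^ 'n \<Rightarrow> 'n bpoly) (C :: real).
              (\<forall>v \<in> hypersimplex_vertices k. bernstein_poly (P v)) \<and>
              C \<ge> 1 \<and> (\<forall>v \<in> hypersimplex_vertices k. coeff_sum (P v) \<le> C) \<and>
              race_is_strong_factory (hypersimplex k) (hypersimplex_vertices k) P C)"
proof
  assume "\<exists>(P :: real ^ 'n \<Rightarrow> 'n bpoly) (C :: real).
              (\<forall>v \<in> hypersimplex_vertices k. bernstein_poly (P v)) \<and>
              C \<ge> 1 \<and> (\<forall>v \<in> hypersimplex_vertices k. coeff_sum (P v) \<le> C) \<and>
              race_is_strong_factory (hypersimplex k) (hypersimplex_vertices k) P C"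
  then obtain P :: "real ^ 'n \<Rightarrow> 'n bpoly" and C where "hypersimplex_race k P C"
    by (auto simp: hypersimplex_race_def)
  then interpret hypersimplex_race k P C .
  obtain u w :: "real ^ 'n" and i j
    where edge: "u \<in> hypersimplex_vertices k" "w \<in> hypersimplex_vertices k" "i \<noteq> j"
      "u $ i = 1" "u $ j = 0" "w $ i = 0" "w $ j = 1" "\<And>l. l \<noteq> i \<Longrightarrow> l \<noteq> j \<Longrightarrow> w $ l = u $ l"
    by (rule hypersimplex_edge_exists[where 'n='n and k=k]) (use assms in auto)
  then obtain jj where "jj < length (P u)" "fst (snd (P u ! jj)) i = 0 \<or> snd (snd (P u ! jj)) j = 0"
    by (metis exists_monomial_not_divisible_on_edge)
  then show False
    using bernstein_exponents_at_vertex[OF assms edge(1)] edge(4,5) by blast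
qed

end
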